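(* For any set $\mathcal{O}$ of upwards closed modalities, the logical equivalence $\equiv_{\mathcal{V}}$ (on closed values and on closed computations of each type) is identical to applicative $\mathcal{O}$-bisimilarity.
   Context: Language: types $\tau ::= \mathbf{1} \mid \mathbf{N} \mid \tau \to \tau'$; signature $\Sigma$ of effect operations with arities $\alpha^n\to\alpha$, $\mathbf{N}\times\alpha^n\to\alpha$, $\alpha^{\mathbf{N}}\to\alpha$ or $\mathbf{N}\times\alpha^{\mathbf{N}}\to\alpha$. Values $V ::= * \mid Z \mid S(V) \mid \lambda x{:}\tau.M \mid x$; computations $M ::= VW \mid \mathbf{return}\,V \mid \mathbf{let}\ M\Rightarrow x\ \mathbf{in}\ N \mid \mathbf{fix}(V) \mid \mathbf{case}\ V\ \mathbf{of}\ \{Z\Rightarrow M; S(x)\Rightarrow N\} \mid \sigma(M_0,\dots) \mid \sigma(V;M_0,\dots) \mid \sigma(V)\mid\sigma(V;W)$, simply typed call-by-value. $\mathit{Val}(\tau)$, $\mathit{Com}(\tau)$: closed values/computations; $\overline{n}=S^n(Z)$. Effect trees $TX$: possibly infinite trees with leaves $\bot$ or elements of $X$ and internal nodes labelled by effect operations (or $\sigma_m$, $m\in\mathbb{N}$, for arities with a $\mathbf{N}$ parameter) with $n$ or $\mathbb{N}$-many children; $t\le t'$ iff $t$ results from $t'$ by replacing subtrees with $\bot$. Each $M\in\mathit{Com}(\tau)$ has an operational effect tree $|M|\in T(\mathit{Val}(\tau))$ from call-by-value evaluation (leaves = returned values, nodes = effect operations encountered, $\bot$ = divergence). Modalities: set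 $\mathcal{O}$, each $o$ with $[\![o]\!]\subseteq T\mathbf{1}$; $t[\in P]\in T\mathbf{1}$ replaces leaves in $P$ by $*$, other $X$-leaves by $\bot$; $o(A)=\{t\mid t[\in A]\in[\![o]\!]\}$. Upwards closed: $[\![o]\!]$ upward closed under $\le$. Logic $\mathcal{V}$: value formulas $VF(\tau)$, computation formulas $CF(\tau)$: $\{n\}\in VF(\mathbf{N})$; $(V\mapsto\Phi)\in VF(\tau\to\tau')$ for $V\in\mathit{Val}(\tau)$, $\Phi\in CF(\tau')$; $o\,\phi\in CF(\tau)$; closed under arbitrary $\bigwedge,\bigvee,\neg$. Semantics: $W\models\{n\}$ iff $W=\overline{n}$; $W\models(V\mapsto\Phi)$ iff $WV\models\Phi$; $M\models o\phi$ iff $|M|[\in\{V\mid V\models\phi\}]\in[\![o]\!]$; connectives classical. $\equiv_{\mathcal{V}}$: same satisfied formulas. Relator: $R[A]=\{y\mid\exists x\in A,\ xRy\}$; $t\,\mathcal{O}(R)\,t'$ iff $\forall A\ \forall o\in\mathcal{O}$, $t\in o(A)\Rightarrow t'\in o(R[A])$. An applicative $\mathcal{O}$-simulation is a family $R^v_\tau\subseteq\mathit{Val}(\tau)^2$, $R^c_\tau\subseteq\mathit{Com}(\tau)^2$ with: (1) $V R^v_{\mathbf{N}} W\Rightarrow V=W$; (2) $M R^c_\tau N\Rightarrow |M|\,\mathcal{O}(R^v_\tau)\,|N|$; (3) $V R^v_{\tau'\to\tau} W\Rightarrow \forall U\in\mathit{Val}(\tau')$, $VU\,R^c_\tau\,WU$.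 An applicative $\mathcal{O}$-bisimulation is a symmetric applicative $\mathcal{O}$-simulation; applicative $\mathcal{O}$-bisimilarity is the largest one. *)

theory Defs
  imports Main
begin

section \<open>Types, signature, syntax (de Bruijn indices)\<close>

datatype ty = TUnit | TNat | Arr ty ty

text \<open>Arities of effect operations:
  AFin n = alpha^n -> alpha, AFinP n = N x alpha^n -> alpha,
  AInf = alpha^N -> alpha, AInfP = N x alpha^N -> alpha.\<close>
datatype arity = AFin nat | AFinP nat | AInf | AInfP

datatype 'op val =
    Star
  | Zero
  | Succ "'op val"
  | Lam ty "'op com"          \<comment> \<open>lambda x:ty. M, body binds de Bruijn index 0\<close>
  | Var nat
and 'op com =
    App "'op val" "'op val"
  | Ret "'op val"
  | Let "'op com" "'op com"    \<comment> \<open>let M => x in N, N binds index 0\<close>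
  | Fix "'op val"
  | Case "'op val" "'op com" "'op com"  \<comment> \<open>case V of {Z => M; S(x) => N}, N binds index 0\<close>
  | Opn 'op "'op com list"
  | OpPn 'op "'op val" "'op com list"
  | OpI 'op "'op val"
  | OpPI 'op "'op val" "'op val"

primrec num :: "nat \<Rightarrow> 'op val" where
  "num 0 = Zero"
| "num (Suc n) = Succ (num n)"

primrec to_nat :: "'op val \<Rightarrow> nat option" where
  "to_nat Star = None"
| "to_nat Zero = Some 0"
| "to_nat (Succ V) = map_option Suc (to_nat V)"
| "to_nat (Lam t M) = None"
| "to_nat (Var i) = None"

inductive vtyping :: "('op \<Rightarrow> arity) \<Rightarrow> ty list \<Rightarrow> 'op val \<Rightarrow> ty \<Rightarrow> bool"
  and ctyping :: "('op \<Rightarrow> arity) \<Rightarrow> ty list \<Rightarrow> 'op com \<Rightarrow> ty \<Rightarrow> bool"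
  for ar :: "'op \<Rightarrow> arity" where
  "vtyping ar G Star TUnit"
| "vtyping ar G Zero TNat"
| "vtyping ar G V TNat \<Longrightarrow> vtyping ar G (Succ V) TNat"
| "ctyping ar (t # G) M t' \<Longrightarrow> vtyping ar G (Lam t M) (Arr t t')"
| "i < length G \<Longrightarrow> vtyping ar G (Var i) (G ! i)"
| "vtyping ar G V (Arr t t') \<Longrightarrow> vtyping ar G W t \<Longrightarrow> ctyping ar G (App V W) t'"
| "vtyping ar G V t \<Longrightarrow> ctyping ar G (Ret V) t"
| "ctyping ar G M t \<Longrightarrow> ctyping ar (t # G) N t' \<Longrightarrow> ctyping ar G (Let M N) t'"
| "vtyping ar G V (Arr (Arr r t) (Arr r t)) \<Longrightarrow> ctyping ar G (Fix V) (Arr r t)"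
| "vtyping ar G V TNat \<Longrightarrow> ctyping ar G M t \<Longrightarrow> ctyping ar (TNat # G) N t
     \<Longrightarrow> ctyping ar G (Case V M N) t"
| "ar s = AFin (length Ms) \<Longrightarrow> (\<forall>M\<in>set Ms. ctyping ar G M t) \<Longrightarrow> ctyping ar G (Opn s Ms) t"
| "ar s = AFinP (length Ms) \<Longrightarrow> vtyping ar G V TNat \<Longrightarrow> (\<forall>M\<in>set Ms. ctyping ar G M t)
     \<Longrightarrow> ctyping ar G (OpPn s V Ms) t"
| "ar s = AInf \<Longrightarrow> vtyping ar G V (Arr TNat t) \<Longrightarrow> ctyping ar G (OpI s V) t"
| "ar s = AInfP \<Longrightarrow> vtyping ar G V TNat \<Longrightarrow> vtyping ar G W (Arr TNat t)
     \<Longrightarrow> ctyping ar G (OpPI s V W) t"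

definition Vals :: "('op \<Rightarrow> arity) \<Rightarrow> ty \<Rightarrow> 'op val set" where
  "Vals ar t = {V. vtyping ar [] V t}"

definition Coms :: "('op \<Rightarrow> arity) \<Rightarrow> ty \<Rightarrow> 'op com set" where
  "Coms ar t = {M. ctyping ar [] M t}"

primrec lift_v :: "nat \<Rightarrow> 'op val \<Rightarrow> 'op val"
  and lift_c :: "nat \<Rightarrow> 'op com \<Rightarrow> 'op com" where
  "lift_v k Star = Star"
| "lift_v k Zero = Zero"
| "lift_v k (Succ V) = Succ (lift_v k V)"
| "lift_v k (Lam t M) = Lam t (lift_c (Suc k) M)"
| "lift_v k (Var i) = (if i < k then Var i else Var (Suc i))"
| "lift_c k (App V W) = App (lift_v k V) (lift_v k W)"
| "lift_c k (Ret V) = Ret (lift_v k V)"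
| "lift_c k (Let M N) = Let (lift_c k M) (lift_c (Suc k) N)"
| "lift_c k (Fix V) = Fix (lift_v k V)"
| "lift_c k (Case V M N) = Case (lift_v k V) (lift_c k M) (lift_c (Suc k) N)"
| "lift_c k (Opn s Ms) = Opn s (map (lift_c k) Ms)"
| "lift_c k (OpPn s V Ms) = OpPn s (lift_v k V) (map (lift_c k) Ms)"
| "lift_c k (OpI s V) = OpI s (lift_v k V)"
| "lift_c k (OpPI s V W) = OpPI s (lift_v k V) (lift_v k W)"

primrec subst_v :: "nat \<Rightarrow> 'op val \<Rightarrow> 'op val \<Rightarrow> 'op val"
  and subst_c :: "nat \<Rightarrow> 'op val \<Rightarrow> 'op com \<Rightarrow> 'op com" where
  "subst_v k U Star = Star"
| "subst_v k U Zero = Zero"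
| "subst_v k U (Succ V) = Succ (subst_v k U V)"
| "subst_v k U (Lam t M) = Lam t (subst_c (Suc k) (lift_v 0 U) M)"
| "subst_v k U (Var i) = (if i = k then U else if k < i then Var (i - 1) else Var i)"
| "subst_c k U (App V W) = App (subst_v k U V) (subst_v k U W)"
| "subst_c k U (Ret V) = Ret (subst_v k U V)"
| "subst_c k U (Let M N) = Let (subst_c k U M) (subst_c (Suc k) (lift_v 0 U) N)"
| "subst_c k U (Fix V) = Fix (subst_v k U V)"
| "subst_c k U (Case V M N) = Case (subst_v k U V) (subst_c k U M) (subst_c (Suc k) (lift_v 0 U) N)"
| "subst_c k U (Opn s Ms) = Opn s (map (subst_c k U) Ms)"
| "subst_c k U (OpPn s V Ms) = OpPn s (subst_v k U V) (map (subst_c k U) Ms)"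
| "subst_c k U (OpI s V) = OpI s (subst_v k U V)"
| "subst_c k U (OpPI s V W) = OpPI s (subst_v k U V) (subst_v k U W)"

text \<open>Possibly infinite trees; leaves are bottom or elements of 'a; internal nodes
  carry a label (effect operation, with the natural-number parameter m for arities
  with an N parameter) and either finitely many (list) or N-many (function) children.\<close>
codatatype ('l, 'a) etree =
    TBot
  | TLeaf 'a
  | TNodeF 'l "('l, 'a) etree list"
  | TNodeI 'l "nat \<Rightarrow> ('l, 'a) etree"

type_synonym 'op label = "'op \<times> nat option"
type_synonym 'op tree1 = "('op label, unit) etree"

text \<open>t <= t' iff t results from t' by replacing subtrees with bottom.\<close>
coinductive tle :: "('l, 'a) etree \<Rightarrow> ('l, 'a) etree \<Rightarrow> bool" where
  "tle TBot t"
| "tle (TLeaf x) (TLeaf x)"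
| "list_all2 tle ts ts' \<Longrightarrow> tle (TNodeF l ts) (TNodeF l ts')"
| "(\<forall>i. tle (f i) (g i)) \<Longrightarrow> tle (TNodeI l f) (TNodeI l g)"

primcorec restr :: "'a set \<Rightarrow> ('l, 'a) etree \<Rightarrow> ('l, unit) etree" where
  "restr P t = (case t of
      TBot \<Rightarrow> TBot
    | TLeaf x \<Rightarrow> (if x \<in> P then TLeaf () else TBot)
    | TNodeF l ts \<Rightarrow> TNodeF l (map (restr P) ts)
    | TNodeI l f \<Rightarrow> TNodeI l (restr P \<circ> f))"

section \<open>Operational semantics: call-by-value stack machine and effect trees\<close>

type_synonym 'op conf = "'op com list \<times> 'op com"
  \<comment> \<open>stack of continuations (x).N (N binds index 0), and current computation\<close>

datatype 'op res =
    is_RStep: RStep "'op conf"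
  | is_RRet: RRet (rret: "'op val")
  | is_RNodeF: RNodeF (rlabF: "'op label") (rconfsF: "'op conf list")
  | is_RNodeI: RNodeI (rlabI: "'op label") (rconfsI: "nat \<Rightarrow> 'op conf")
  | is_RStuck: RStuck

fun step :: "'op conf \<Rightarrow> 'op res" where
  "step (S, Let M N) = RStep (N # S, M)"
| "step ([], Ret V) = RRet V"
| "step (N # S, Ret V) = RStep (S, subst_c 0 V N)"
| "step (S, App (Lam t M) V) = RStep (S, subst_c 0 V M)"
| "step (S, Fix (Lam (Arr r t) B)) =
     RStep (S, App (Lam (Arr r t) B)
        (Lam r (Let (Fix (lift_v 0 (Lam (Arr r t) B))) (App (Var 0) (Var 1)))))"
| "step (S, Case Zero M N) = RStep (S, M)"
| "step (S, Case (Succ V) M N) = RStep (S, subst_c 0 V N)"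
| "step (S, Opn s Ms) = RNodeF (s, None) (map (\<lambda>M. (S, M)) Ms)"
| "step (S, OpPn s V Ms) = (case to_nat V of
     Some m \<Rightarrow> RNodeF (s, Some m) (map (\<lambda>M. (S, M)) Ms) | None \<Rightarrow> RStuck)"
| "step (S, OpI s V) = RNodeI (s, None) (\<lambda>i. (S, App V (num i)))"
| "step (S, OpPI s V W) = (case to_nat V of
     Some m \<Rightarrow> RNodeI (s, Some m) (\<lambda>i. (S, App W (num i))) | None \<Rightarrow> RStuck)"
| "step c = RStuck"

fun stepn :: "nat \<Rightarrow> 'op conf \<Rightarrow> 'op res" where
  "stepn 0 c = step c"
| "stepn (Suc n) c = (case step c of RStep c' \<Rightarrow> stepn n c' | r \<Rightarrow> r)"

definition is_step :: "'op res \<Rightarrow> bool" where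
  "is_step r = (case r of RStep _ \<Rightarrow> True | _ \<Rightarrow> False)"

text \<open>The first non-silent outcome of running the machine from c; if the machine
  performs infinitely many silent steps (divergence) the outcome is RStuck, which,
  like a stuck configuration, yields the tree bottom.\<close>
definition final :: "'op conf \<Rightarrow> 'op res" where
  "final c = (if \<exists>n. \<not> is_step (stepn n c)
              then stepn (LEAST n. \<not> is_step (stepn n c)) c else RStuck)"

primcorec optree :: "'op conf \<Rightarrow> ('op label, 'op val) etree" where
  "optree c = (if is_RRet (final c) then TLeaf (rret (final c))
    else if is_RNodeF (final c) then TNodeF (rlabF (final c)) (map optree (rconfsF (final c)))
    else if is_RNodeI (final c) then TNodeI (rlabI (final c)) (optree \<circ> rconfsI (final c))
    else TBot)"

definition eff_tree :: "'op com \<Rightarrow> ('op label, 'op val) etree" where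
  "eff_tree M = optree ([], M)"

text \<open>A set Mods of modalities (of type 'm), each m with denotation sem m \<subseteq> T1.\<close>
definition upwards_closed :: "'m set \<Rightarrow> ('m \<Rightarrow> 'op tree1 set) \<Rightarrow> bool" where
  "upwards_closed Mods sem = (\<forall>m\<in>Mods. \<forall>t t'. t \<in> sem m \<longrightarrow> tle t t' \<longrightarrow> t' \<in> sem m)"

definition mod_set :: "('m \<Rightarrow> 'op tree1 set) \<Rightarrow> 'm \<Rightarrow> 'op val set \<Rightarrow> ('op label, 'op val) etree set" where
  "mod_set sem m A = {t. restr A t \<in> sem m}"

text \<open>The logic V, represented through the extensions of its formulas:
  vform_ext ar Mods sem tau A holds iff A = {V \<in> Val(tau) | V \<Turnstile> phi} for some phi \<in> VF(tau),
  and cform_ext ar Mods sem tau B iff B = {M \<in> Com(tau) | M \<Turnstile> Phi} for some Phi \<in> CF(tau).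
  The clauses follow the formula formation rules and their semantics; conjunctions
  and disjunctions are over arbitrary (possibly empty, possibly infinite) sets.\<close>
inductive vform_ext :: "('op \<Rightarrow> arity) \<Rightarrow> 'm set \<Rightarrow> ('m \<Rightarrow> 'op tree1 set) \<Rightarrow> ty \<Rightarrow> 'op val set \<Rightarrow> bool"
  and cform_ext :: "('op \<Rightarrow> arity) \<Rightarrow> 'm set \<Rightarrow> ('m \<Rightarrow> 'op tree1 set) \<Rightarrow> ty \<Rightarrow> 'op com set \<Rightarrow> bool"
  for ar :: "'op \<Rightarrow> arity" and Mods :: "'m set" and sem :: "'m \<Rightarrow> 'op tree1 set" where
  vf_num: "vform_ext ar Mods sem TNat {num n}"
| vf_app: "V \<in> Vals ar t \<Longrightarrow> cform_ext ar Mods sem t' B \<Longrightarrow>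
     vform_ext ar Mods sem (Arr t t') {W \<in> Vals ar (Arr t t'). App W V \<in> B}"
| vf_and: "\<forall>A\<in>S. vform_ext ar Mods sem t A \<Longrightarrow> vform_ext ar Mods sem t (Vals ar t \<inter> \<Inter>S)"
| vf_or: "\<forall>A\<in>S. vform_ext ar Mods sem t A \<Longrightarrow> vform_ext ar Mods sem t (\<Union>S)"
| vf_not: "vform_ext ar Mods sem t A \<Longrightarrow> vform_ext ar Mods sem t (Vals ar t - A)"
| cf_mod: "m \<in> Mods \<Longrightarrow> vform_ext ar Mods sem t A \<Longrightarrow>
     cform_ext ar Mods sem t {M \<in> Coms ar t. eff_tree M \<in> mod_set sem m A}"
| cf_and: "\<forall>B\<in>S. cform_ext ar Mods sem t B \<Longrightarrow> cform_ext ar Mods sem t (Coms ar t \<inter> \<Inter>S)"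
| cf_or: "\<forall>B\<in>S. cform_ext ar Mods sem t B \<Longrightarrow> cform_ext ar Mods sem t (\<Union>S)"
| cf_not: "cform_ext ar Mods sem t B \<Longrightarrow> cform_ext ar Mods sem t (Coms ar t - B)"

definition veqV :: "('op \<Rightarrow> arity) \<Rightarrow> 'm set \<Rightarrow> ('m \<Rightarrow> 'op tree1 set) \<Rightarrow> ty \<Rightarrow> ('op val \<times> 'op val) set" where
  "veqV ar Mods sem t = {(V, W). V \<in> Vals ar t \<and> W \<in> Vals ar t \<and>
      (\<forall>A. vform_ext ar Mods sem t A \<longrightarrow> (V \<in> A \<longleftrightarrow> W \<in> A))}"

definition ceqV :: "('op \<Rightarrow> arity) \<Rightarrow> 'm set \<Rightarrow> ('m \<Rightarrow> 'op tree1 set) \<Rightarrow> ty \<Rightarrow> ('op com \<times> 'op com) set" where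
  "ceqV ar Mods sem t = {(M, N). M \<in> Coms ar t \<and> N \<in> Coms ar t \<and>
      (\<forall>B. cform_ext ar Mods sem t B \<longrightarrow> (M \<in> B \<longleftrightarrow> N \<in> B))}"

definition relator :: "'m set \<Rightarrow> ('m \<Rightarrow> 'op tree1 set) \<Rightarrow> ('op val \<times> 'op val) set
    \<Rightarrow> ('op label, 'op val) etree \<Rightarrow> ('op label, 'op val) etree \<Rightarrow> bool" where
  "relator Mods sem R t t' = (\<forall>A. \<forall>m\<in>Mods. t \<in> mod_set sem m A \<longrightarrow> t' \<in> mod_set sem m (R `` A))"

definition app_sim :: "('op \<Rightarrow> arity) \<Rightarrow> 'm set \<Rightarrow> ('m \<Rightarrow> 'op tree1 set)
    \<Rightarrow> (ty \<Rightarrow> ('op val \<times> 'op val) set) \<Rightarrow> (ty \<Rightarrow> ('op com \<times> 'op com) set) \<Rightarrow> bool" where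
  "app_sim ar Mods sem Rv Rc =
    ((\<forall>t. Rv t \<subseteq> Vals ar t \<times> Vals ar t \<and> Rc t \<subseteq> Coms ar t \<times> Coms ar t) \<and>
     (\<forall>V W. (V, W) \<in> Rv TNat \<longrightarrow> V = W) \<and>
     (\<forall>t M N. (M, N) \<in> Rc t \<longrightarrow> relator Mods sem (Rv t) (eff_tree M) (eff_tree N)) \<and>
     (\<forall>t' t V W. (V, W) \<in> Rv (Arr t' t) \<longrightarrow> (\<forall>U \<in> Vals ar t'. (App V U, App W U) \<in> Rc t)))"

definition app_bisim :: "('op \<Rightarrow> arity) \<Rightarrow> 'm set \<Rightarrow> ('m \<Rightarrow> 'op tree1 set)
    \<Rightarrow> (ty \<Rightarrow> ('op val \<times> 'op val) set) \<Rightarrow> (ty \<Rightarrow> ('op com \<times> 'op com) set) \<Rightarrow> bool" where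
  "app_bisim ar Mods sem Rv Rc =
    (app_sim ar Mods sem Rv Rc \<and> (\<forall>t. sym (Rv t) \<and> sym (Rc t)))"

definition vbisimilar :: "('op \<Rightarrow> arity) \<Rightarrow> 'm set \<Rightarrow> ('m \<Rightarrow> 'op tree1 set) \<Rightarrow> ty \<Rightarrow> ('op val \<times> 'op val) set" where
  "vbisimilar ar Mods sem t = (\<Union>{Rv t | Rv Rc. app_bisim ar Mods sem Rv Rc})"

definition cbisimilar :: "('op \<Rightarrow> arity) \<Rightarrow> 'm set \<Rightarrow> ('m \<Rightarrow> 'op tree1 set) \<Rightarrow> ty \<Rightarrow> ('op com \<times> 'op com) set" where
  "cbisimilar ar Mods sem t = (\<Union>{Rc t | Rv Rc. app_bisim ar Mods sem Rv Rc})"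

end

theory Submission
  imports Defs
begin

(* Soundness: by induction on formulas, every applicative bisimulation relates only
   computations and values satisfying the same formulas.  Negation is handled by symmetry;
   the modal case uses type preservation: all leaves of |M| are values of the type of M, so
   passing from A to R[A], both intersected with Val(tau), only replaces subtrees of
   |M|[in A] by bottom, and upward closure of the modality applies.
   Completeness: logical equivalence is itself an applicative bisimulation.  For the relator
   condition, the disjunction over V in A of the conjunction of all formulas satisfied by V
   is a formula X with A \<inter> Val(tau) \<subseteq> X \<subseteq> \<equiv>[A]; M satisfies o X, hence so does N, and
   upward closure enlarges X to \<equiv>[A]. *)

lemma vtyping_ctyping_lift:
  "vtyping ar G V t \<Longrightarrow> \<forall>k u. k \<le> length G \<longrightarrow> vtyping ar (take k G @ u # drop k G) (lift_v k V) t"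
  "ctyping ar G M t \<Longrightarrow> \<forall>k u. k \<le> length G \<longrightarrow> ctyping ar (take k G @ u # drop k G) (lift_c k M) t"
proof (induction rule: vtyping_ctyping.inducts)
  case (5 i G)
  show ?case
  proof (intro allI impI)
    fix k u assume k: "k \<le> length G"
    let ?G' = "take k G @ u # drop k G" and ?j = "if i < k then i else Suc i"
    have "?j < length ?G'" "?G' ! ?j = G ! i" using k 5 by (auto simp: nth_append)
    then show "vtyping ar ?G' (lift_v k (Var i)) (G ! i)"
      by (metis (full_types) lift_v.simps(5) vtyping_ctyping.intros(5))
  qed
qed (fastforce intro!: vtyping_ctyping.intros)+

lemma vtyping_lift0: "vtyping ar G V t \<Longrightarrow> vtyping ar (u # G) (lift_v 0 V) t"
  using vtyping_ctyping_lift(1)[of ar G V t] by fastforce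

lemma vtyping_ctyping_subst:
  "vtyping ar G V t \<Longrightarrow> \<forall>k U. k < length G \<longrightarrow> vtyping ar (take k G @ drop (Suc k) G) U (G ! k)
      \<longrightarrow> vtyping ar (take k G @ drop (Suc k) G) (subst_v k U V) t"
  "ctyping ar G M t \<Longrightarrow> \<forall>k U. k < length G \<longrightarrow> vtyping ar (take k G @ drop (Suc k) G) U (G ! k)
      \<longrightarrow> ctyping ar (take k G @ drop (Suc k) G) (subst_c k U M) t"
proof (induction rule: vtyping_ctyping.inducts)
  case (5 i G)
  show ?case
  proof (intro allI impI)
    fix k U assume k: "k < length G" and U: "vtyping ar (take k G @ drop (Suc k) G) U (G ! k)"
    let ?G' = "take k G @ drop (Suc k) G" and ?j = "if i < k then i else i - 1"
    have "subst_v k U (Var i) = (if i = k then U else Var ?j)" by simp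
    moreover have "i \<noteq> k \<Longrightarrow> ?j < length ?G' \<and> ?G' ! ?j = G ! i" using k 5 by (auto simp: nth_append)
    ultimately show "vtyping ar ?G' (subst_v k U (Var i)) (G ! i)"
      using U vtyping_ctyping.intros(5)[of ?j ?G' ar] by (cases "i = k") simp_all
  qed
next
  case (4 t G M t')
  show ?case
  proof (intro allI impI)
    fix k U assume "k < length G" and U: "vtyping ar (take k G @ drop (Suc k) G) U (G ! k)"
    then show "vtyping ar (take k G @ drop (Suc k) G) (subst_v k U (Lam t M)) (Arr t t')"
      using 4(2)[rule_format, of "Suc k" "lift_v 0 U"] vtyping_lift0[OF U, of t]
      by (auto intro: vtyping_ctyping.intros)
  qed
next
  case (8 G M t N t')
  show ?case
  proof (intro allI impI)
    fix k U assume "k < length G" and U: "vtyping ar (take k G @ drop (Suc k) G) U (G ! k)"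
    then show "ctyping ar (take k G @ drop (Suc k) G) (subst_c k U (Let M N)) t'"
      using 8(2)[rule_format, of k U] 8(4)[rule_format, of "Suc k" "lift_v 0 U"]
        vtyping_lift0[OF U, of t]
      by (auto intro: vtyping_ctyping.intros)
  qed
next
  case (10 G V M t N)
  show ?case
  proof (intro allI impI)
    fix k U assume "k < length G" and U: "vtyping ar (take k G @ drop (Suc k) G) U (G ! k)"
    then show "ctyping ar (take k G @ drop (Suc k) G) (subst_c k U (Case V M N)) t"
      using 10(2,4)[rule_format, of k U] 10(6)[rule_format, of "Suc k" "lift_v 0 U"]
        vtyping_lift0[OF U, of TNat]
      by (auto intro: vtyping_ctyping.intros)
  qed
qed (fastforce intro!: vtyping_ctyping.intros)+

lemma ctyping_subst0: "ctyping ar [u] M t \<Longrightarrow> vtyping ar [] U u \<Longrightarrow> ctyping ar [] (subst_c 0 U M) t"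
  using vtyping_ctyping_subst(2)[of ar "[u]" M t] by fastforce

lemma vtyping_num: "vtyping ar G (num n) TNat"
  by (induction n) (auto intro: vtyping_ctyping.intros)

inductive_cases vtyping_LamE: "vtyping ar G (Lam t M) T"
inductive_cases vtyping_SuccE: "vtyping ar G (Succ V) T"
inductive_cases vtyping_StarE: "vtyping ar G Star T"
inductive_cases vtyping_VarE: "vtyping ar G (Var i) T"
inductive_cases ctyping_AppE: "ctyping ar G (App V W) T"
inductive_cases ctyping_RetE: "ctyping ar G (Ret V) T"
inductive_cases ctyping_LetE: "ctyping ar G (Let M N) T"
inductive_cases ctyping_FixE: "ctyping ar G (Fix V) T"
inductive_cases ctyping_CaseE: "ctyping ar G (Case V M N) T"
inductive_cases ctyping_OpnE: "ctyping ar G (Opn s Ms) T"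
inductive_cases ctyping_OpPnE: "ctyping ar G (OpPn s V Ms) T"
inductive_cases ctyping_OpIE: "ctyping ar G (OpI s V) T"
inductive_cases ctyping_OpPIE: "ctyping ar G (OpPI s V W) T"

lemma closed_nat_value_is_num: "vtyping ar [] V TNat \<Longrightarrow> \<exists>n. V = num n"
proof (induction V)
  case Zero then show ?case by (metis num.simps(1))
next
  case (Succ V) then show ?case by (metis num.simps(2) vtyping_SuccE)
qed (auto elim: vtyping_StarE vtyping_LamE vtyping_VarE)

inductive stack_typing :: "('op \<Rightarrow> arity) \<Rightarrow> 'op com list \<Rightarrow> ty \<Rightarrow> ty \<Rightarrow> bool" for ar where
  "stack_typing ar [] t t"
| "ctyping ar [t] N t' \<Longrightarrow> stack_typing ar S t' tf \<Longrightarrow> stack_typing ar (N # S) t tf"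

inductive_cases stack_typing_NilE: "stack_typing ar [] t tf"
inductive_cases stack_typing_ConsE: "stack_typing ar (N # S) t tf"

definition conf_typing :: "('op \<Rightarrow> arity) \<Rightarrow> ty \<Rightarrow> 'op conf \<Rightarrow> bool" where
  "conf_typing ar tf c = (\<exists>t. ctyping ar [] (snd c) t \<and> stack_typing ar (fst c) t tf)"

definition res_typing :: "('op \<Rightarrow> arity) \<Rightarrow> ty \<Rightarrow> 'op res \<Rightarrow> bool" where
  "res_typing ar tf r = (case r of
      RStep c \<Rightarrow> conf_typing ar tf c
    | RRet V \<Rightarrow> V \<in> Vals ar tf
    | RNodeF l cs \<Rightarrow> (\<forall>c\<in>set cs. conf_typing ar tf c)
    | RNodeI l f \<Rightarrow> (\<forall>i. conf_typing ar tf (f i))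
    | RStuck \<Rightarrow> True)"

lemma ctyping_fix_unfolding:
  assumes "vtyping ar [] V (Arr (Arr r t) (Arr r t))"
  shows "ctyping ar [] (App V (Lam r (Let (Fix (lift_v 0 V)) (App (Var 0) (Var 1))))) (Arr r t)"
proof -
  have "ctyping ar [Arr r t, r] (App (Var 0) (Var 1)) t"
    using vtyping_ctyping.intros(5)[of 0 "[Arr r t, r]" ar] vtyping_ctyping.intros(5)[of 1 "[Arr r t, r]" ar]
    by (auto intro: vtyping_ctyping.intros(6))
  then show ?thesis
    using assms vtyping_lift0[OF assms, of r] by (auto intro!: vtyping_ctyping.intros)
qed

lemma step_preserves_typing: "conf_typing ar tf c \<Longrightarrow> res_typing ar tf (step c)"
proof (induction c rule: step.induct)
  case (5 S r t B)
  then obtain T where B: "ctyping ar [] (Fix (Lam (Arr r t) B)) T" and S: "stack_typing ar S T tf"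
    by (auto simp: conf_typing_def)
  from B have "vtyping ar [] (Lam (Arr r t) B) (Arr (Arr r t) (Arr r t))" and "T = Arr r t"
    by (auto elim: ctyping_FixE vtyping_LamE)
  then show ?case
    using S ctyping_fix_unfolding by (fastforce simp: conf_typing_def res_typing_def)
qed (auto simp: conf_typing_def res_typing_def Vals_def intro: ctyping_subst0 stack_typing.intros
      intro!: vtyping_ctyping.intros vtyping_num split: option.splits
      elim!: ctyping_LetE ctyping_RetE ctyping_AppE ctyping_CaseE ctyping_OpnE ctyping_OpPnE
        ctyping_OpIE ctyping_OpPIE vtyping_LamE vtyping_SuccE stack_typing_NilE stack_typing_ConsE)

lemma stepn_preserves_typing: "conf_typing ar tf c \<Longrightarrow> res_typing ar tf (stepn n c)"
proof (induction n arbitrary: c)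
  case 0 then show ?case by (simp add: step_preserves_typing)
next
  case (Suc n)
  then show ?case
    using step_preserves_typing[OF Suc.prems] by (cases "step c") (auto simp: res_typing_def)
qed

lemma final_preserves_typing: "conf_typing ar tf c \<Longrightarrow> res_typing ar tf (final c)"
  by (auto simp: final_def stepn_preserves_typing res_typing_def[of _ _ RStuck])

lemma optree_final: "optree c = (case final c of
      RRet V \<Rightarrow> TLeaf V
    | RNodeF l cs \<Rightarrow> TNodeF l (map optree cs)
    | RNodeI l f \<Rightarrow> TNodeI l (optree \<circ> f)
    | _ \<Rightarrow> TBot)"
  by (subst optree.code) (simp split: res.split)

lemma optree_eq_nodes:
  "optree c = TLeaf V \<Longrightarrow> final c = RRet V"
  "optree c = TNodeF l ts \<Longrightarrow> \<exists>cs. final c = RNodeF l cs \<and> ts = map optree cs"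
  "optree c = TNodeI l g \<Longrightarrow> \<exists>f. final c = RNodeI l f \<and> g = optree \<circ> f"
  using optree_final[of c] by (auto split: res.splits)

lemma optree_leaves_typed:
  assumes "V \<in> set2_etree (optree c)" and "conf_typing ar tf c"
  shows "V \<in> Vals ar tf"
proof -
  have "\<forall>c. optree c = T \<longrightarrow> conf_typing ar tf c \<longrightarrow> V \<in> Vals ar tf" if "V \<in> set2_etree T" for T
    using that
  proof (induction rule: etree.set_induct(2))
    fix V
    show "\<forall>c. optree c = TLeaf V \<longrightarrow> conf_typing ar tf c \<longrightarrow> V \<in> Vals ar tf"
      using final_preserves_typing by (fastforce dest: optree_eq_nodes(1) simp: res_typing_def)
  next
    fix l ts T V
    assume "T \<in> set ts" "\<forall>c. optree c = T \<longrightarrow> conf_typing ar tf c \<longrightarrow> V \<in> Vals ar tf"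
    then show "\<forall>c. optree c = TNodeF l ts \<longrightarrow> conf_typing ar tf c \<longrightarrow> V \<in> Vals ar tf"
      using final_preserves_typing by (fastforce dest: optree_eq_nodes(2) simp: res_typing_def)
  next
    fix l T V and g :: "nat \<Rightarrow> _"
    assume "T \<in> range g" "\<forall>c. optree c = T \<longrightarrow> conf_typing ar tf c \<longrightarrow> V \<in> Vals ar tf"
    then show "\<forall>c. optree c = TNodeI l g \<longrightarrow> conf_typing ar tf c \<longrightarrow> V \<in> Vals ar tf"
      using final_preserves_typing by (fastforce dest: optree_eq_nodes(3) simp: res_typing_def)
  qed
  then show ?thesis using assms by blast
qed

lemma conf_typing_initial: "M \<in> Coms ar t \<Longrightarrow> conf_typing ar t ([], M)"
  by (auto simp: conf_typing_def Coms_def intro: stack_typing.intros)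

lemma eff_tree_leaves_typed: "M \<in> Coms ar t \<Longrightarrow> set2_etree (eff_tree M) \<subseteq> Vals ar t"
  unfolding eff_tree_def using optree_leaves_typed conf_typing_initial by blast

lemma restr_simps:
  "restr P TBot = TBot"
  "restr P (TLeaf x) = (if x \<in> P then TLeaf () else TBot)"
  "restr P (TNodeF l ts) = TNodeF l (map (restr P) ts)"
  "restr P (TNodeI l f) = TNodeI l (restr P \<circ> f)"
  by (subst restr.code; simp)+

lemma tle_restr_mono:
  assumes "set2_etree T \<subseteq> C" and "A \<inter> C \<subseteq> B"
  shows "tle (restr A T) (restr B T)"
  using assms(1)
proof (coinduction arbitrary: T rule: tle.coinduct)
  case (tle T)
  then show ?case
    using assms(2) by (cases T) (auto simp: restr_simps list.rel_map intro!: list.rel_refl_strong)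
qed

lemma mod_set_mono:
  assumes "upwards_closed Mods sem" and "m \<in> Mods" and "set2_etree T \<subseteq> C"
    and "T \<in> mod_set sem m A" and "A \<inter> C \<subseteq> B"
  shows "T \<in> mod_set sem m B"
  using assms tle_restr_mono[OF assms(3,5)] unfolding upwards_closed_def mod_set_def by blast

lemma app_bisim_preserves_formulas:
  assumes bis: "app_bisim ar Mods sem Rv Rc" and up: "upwards_closed Mods sem"
  shows "vform_ext ar Mods sem t A \<Longrightarrow> Rv t `` A \<subseteq> A"
    and "cform_ext ar Mods sem t B \<Longrightarrow> Rc t `` B \<subseteq> B"
proof (induction rule: vform_ext_cform_ext.inducts)
  case (vf_app V t t' B)
  then show ?case using bis by (auto simp: app_bisim_def app_sim_def) blast
next
  case (vf_not t A)
  then show ?case using bis by (auto simp: app_bisim_def app_sim_def sym_def) blast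
next
  case (cf_mod m t A)
  show ?case
  proof
    fix N assume "N \<in> Rc t `` {M \<in> Coms ar t. eff_tree M \<in> mod_set sem m A}"
    then obtain M where MN: "(M, N) \<in> Rc t" and M: "eff_tree M \<in> mod_set sem m A" by blast
    have "relator Mods sem (Rv t) (eff_tree M) (eff_tree N)" and N: "N \<in> Coms ar t"
      using bis MN by (auto simp: app_bisim_def app_sim_def)
    then have "eff_tree N \<in> mod_set sem m (Rv t `` A)" using M cf_mod(1) by (auto simp: relator_def)
    then have "eff_tree N \<in> mod_set sem m A"
      using mod_set_mono[OF up cf_mod(1) eff_tree_leaves_typed[OF N]] cf_mod(3) by blast
    then show "N \<in> {M \<in> Coms ar t. eff_tree M \<in> mod_set sem m A}" using N by blast
  qed
next
  case (cf_not t B)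
  then show ?case using bis by (auto simp: app_bisim_def app_sim_def sym_def) blast
next
  case (vf_and S t)
  then show ?case using bis unfolding app_bisim_def app_sim_def by blast
next
  case (cf_and S t)
  then show ?case using bis unfolding app_bisim_def app_sim_def by blast
qed (use bis in \<open>auto simp: app_bisim_def app_sim_def\<close>)

lemma app_bisim_subset_logical_equivalence:
  assumes "app_bisim ar Mods sem Rv Rc" and "upwards_closed Mods sem"
  shows "Rv t \<subseteq> veqV ar Mods sem t" and "Rc t \<subseteq> ceqV ar Mods sem t"
  using assms app_bisim_preserves_formulas[OF assms]
  by (fastforce simp: app_bisim_def app_sim_def sym_def veqV_def ceqV_def)+

(* Closure of the logic under negation makes one direction of the definition suffice. *)
lemma veqV_iff_formulas_inherited:
  "(V, W) \<in> veqV ar Mods sem t \<longleftrightarrow> V \<in> Vals ar t \<and> W \<in> Vals ar t \<and>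
     (\<forall>A. vform_ext ar Mods sem t A \<longrightarrow> V \<in> A \<longrightarrow> W \<in> A)"
  using vf_not[of ar Mods sem t] by (auto simp: veqV_def)

lemma formula_saturation:
  "\<exists>X. vform_ext ar Mods sem t X \<and> A \<inter> Vals ar t \<subseteq> X \<and> X \<subseteq> veqV ar Mods sem t `` A"
proof -
  define closure where "closure V = Vals ar t \<inter> \<Inter>{A'. vform_ext ar Mods sem t A' \<and> V \<in> A'}" for V
  have "vform_ext ar Mods sem t (closure V)" for V
    unfolding closure_def by (rule vf_and) blast
  then have "vform_ext ar Mods sem t (\<Union>(closure ` (A \<inter> Vals ar t)))"
    by (intro vf_or) blast
  moreover have "\<Union>(closure ` (A \<inter> Vals ar t)) \<subseteq> veqV ar Mods sem t `` A"
    by (auto simp: closure_def Image_def veqV_iff_formulas_inherited)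
  ultimately show ?thesis unfolding closure_def by blast
qed

lemma app_bisim_logical_equivalence:
  assumes up: "upwards_closed Mods sem"
  shows "app_bisim ar Mods sem (veqV ar Mods sem) (ceqV ar Mods sem)"
proof -
  have nat: "V = W" if VW: "(V, W) \<in> veqV ar Mods sem TNat" for V W
  proof -
    obtain n where "V = num n"
      using VW closed_nat_value_is_num[of ar V] by (auto simp: veqV_def Vals_def)
    then show ?thesis using VW vf_num[of ar Mods sem n] by (auto simp: veqV_def)
  qed
  have app: "(App V U, App W U) \<in> ceqV ar Mods sem t"
    if "(V, W) \<in> veqV ar Mods sem (Arr t' t)" and "U \<in> Vals ar t'" for V W U t t'
    using that vf_app[OF \<open>U \<in> Vals ar t'\<close>, of Mods sem t]
    by (auto simp: veqV_def ceqV_def Vals_def Coms_def intro: vtyping_ctyping.intros)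
  have rel: "relator Mods sem (veqV ar Mods sem t) (eff_tree M) (eff_tree N)"
    if MN: "(M, N) \<in> ceqV ar Mods sem t" for M N t
    unfolding relator_def
  proof (intro allI ballI impI)
    fix A m assume m: "m \<in> Mods" and MA: "eff_tree M \<in> mod_set sem m A"
    obtain X where X: "vform_ext ar Mods sem t X" "A \<inter> Vals ar t \<subseteq> X"
      "X \<subseteq> veqV ar Mods sem t `` A"
      using formula_saturation by blast
    have Ms: "M \<in> Coms ar t" "N \<in> Coms ar t" using MN by (auto simp: ceqV_def)
    have "eff_tree M \<in> mod_set sem m X"
      by (rule mod_set_mono[OF up m eff_tree_leaves_typed[OF Ms(1)] MA X(2)])
    then have "eff_tree N \<in> mod_set sem m X"
      using MN cf_mod[OF m X(1)] unfolding ceqV_def by blast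
    then show "eff_tree N \<in> mod_set sem m (veqV ar Mods sem t `` A)"
      using mod_set_mono[OF up m eff_tree_leaves_typed[OF Ms(2)]] X(3) by blast
  qed
  show ?thesis unfolding app_bisim_def app_sim_def
    using nat app rel by (auto simp: veqV_def ceqV_def sym_def)
qed

theorem theorem2:
  fixes ar :: "'op \<Rightarrow> arity" and Mods :: "'m set" and sem :: "'m \<Rightarrow> 'op tree1 set"
  assumes "upwards_closed Mods sem"
  shows "(\<forall>t. veqV ar Mods sem t = vbisimilar ar Mods sem t) \<and>
         (\<forall>t. ceqV ar Mods sem t = cbisimilar ar Mods sem t)"
proof -
  have "app_bisim ar Mods sem (veqV ar Mods sem) (ceqV ar Mods sem)"
    using assms by (rule app_bisim_logical_equivalence)
  then show ?thesis
    using app_bisim_subset_logical_equivalence[OF _ assms]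
    unfolding vbisimilar_def cbisimilar_def by blast
qed

end
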